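(* For all $f,g\in\mathcal{S}(\Omega)$, \[f\cdot g=f\cdot g^\circ_s+\mathrm{im}\,(f\cdot g'_s)\] in $\Omega\setminus\mathbb{R}$, where $\mathrm{im}\,(f\cdot g'_s)$ denotes $x\mapsto\mathrm{im}(x)\,(f\cdot g'_s)(x)$. Moreover, for all $x\in\Omega\setminus\mathbb{R}$, \[(f\cdot g)(x)=f(x)\,g^\circ_s(x)+\mathrm{im}(x)\big(f(x)\,g'_s(x)\big)-\big(\mathrm{im}(x),f'_s(x),g(x^c)\big).\]
   Context: Let $A$ be a finite-dimensional real algebra with unit $1$ ($\mathbb{R}$ identified with $\mathbb{R}1$) which is alternative (the associator $(x,y,z)=(xy)z-x(yz)$ is alternating), with a $^*$-involution $x\mapsto x^c$ (real linear, $(x^c)^c=x$, $(xy)^c=y^cx^c$, $r^c=r$ for $r\in\mathbb{R}$). Let $t(x)=x+x^c$, $n(x)=xx^c$, $\mathbb{S}_A=\{J\in A:t(J)=0,n(J)=1\}$ (assumed non-empty), $Q_A=\mathbb{R}\cup\{x\in A:t(x),n(x)\in\mathbb{R},\ 4n(x)>t(x)^2\}$; every $x\in Q_A$ is $\alpha+\beta J$ with $\alpha,\beta\in\mathbb{R}$, $J\in\mathbb{S}_A$, and $x^c=\alpha-\beta J$; $\mathrm{re}(x)=t(x)/2$, $\mathrm{im}(x)=x-\mathrm{re}(x)$. Let $D\subseteq\mathbb{C}$ be non-empty and invariant under complex conjugation and $\Omega=\{\alpha+\beta J:\alpha+i\beta\in D,\ J\in\mathbb{S}_A\}$. Let $A_{\mathbb{C}}=\{a+\imath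 b:a,b\in A\}$ with product $(a+\imath b)(a'+\imath b')=aa'-bb'+\imath(ab'+ba')$ and conjugation $\overline{a+\imath b}=a-\imath b$. A stem function is $F=F_1+\imath F_2:D\to A_{\mathbb{C}}$ with $F(\bar z)=\overline{F(z)}$; it induces the slice function $f=\mathcal{I}(F)$, $f(\alpha+\beta J)=F_1(\alpha+i\beta)+JF_2(\alpha+i\beta)$; $\mathcal{S}(\Omega)$ is the set of slice functions on $\Omega$ and the slice product is $f\cdot g=\mathcal{I}(FG)$ (pointwise product of stem functions). The spherical value of $f$ is the slice function $f^\circ_s(x)=\frac12(f(x)+f(x^c))$ on $\Omega$ and the spherical derivative is the slice function $f'_s(x)=\frac12\mathrm{im}(x)^{-1}(f(x)-f(x^c))$ on $\Omega\setminus\mathbb{R}$; slice products of functions with different domains are taken on the intersection of the domains. *)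

theory Defs
  imports "HOL-Analysis.Analysis"
begin

text \<open>The algebra A is a finite-dimensional real vector space (a type of class
euclidean_space) with a real-bilinear product mul (not assumed associative),
a unit e and an involution cj.\<close>

definition assoc :: "('a::real_vector \<Rightarrow> 'a \<Rightarrow> 'a) \<Rightarrow> 'a \<Rightarrow> 'a \<Rightarrow> 'a \<Rightarrow> 'a" where
  "assoc mul x y z = mul (mul x y) z - mul x (mul y z)"

definition alt_star_alg :: "('a::euclidean_space \<Rightarrow> 'a \<Rightarrow> 'a) \<Rightarrow> 'a \<Rightarrow> ('a \<Rightarrow> 'a) \<Rightarrow> bool" where
  "alt_star_alg mul e cj \<longleftrightarrow>
     bilinear mul \<and> e \<noteq> 0 \<and>
     (\<forall>x. mul e x = x \<and> mul x e = x) \<and>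
     (\<forall>x y. assoc mul x x y = 0 \<and> assoc mul x y x = 0 \<and> assoc mul y x x = 0) \<and>
     linear cj \<and> (\<forall>x. cj (cj x) = x) \<and>
     (\<forall>x y. cj (mul x y) = mul (cj y) (cj x)) \<and>
     (\<forall>r::real. cj (r *\<^sub>R e) = r *\<^sub>R e)"

definition realsA :: "'a::real_vector \<Rightarrow> 'a set" where
  "realsA e = range (\<lambda>r::real. r *\<^sub>R e)"

definition trc :: "('a::real_vector \<Rightarrow> 'a) \<Rightarrow> 'a \<Rightarrow> 'a" where
  "trc cj x = x + cj x"

definition nrm :: "('a::real_vector \<Rightarrow> 'a \<Rightarrow> 'a) \<Rightarrow> ('a \<Rightarrow> 'a) \<Rightarrow> 'a \<Rightarrow> 'a" where
  "nrm mul cj x = mul x (cj x)"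

definition sphA :: "('a::real_vector \<Rightarrow> 'a \<Rightarrow> 'a) \<Rightarrow> 'a \<Rightarrow> ('a \<Rightarrow> 'a) \<Rightarrow> 'a set" where
  "sphA mul e cj = {J. trc cj J = 0 \<and> nrm mul cj J = e}"

definition reA :: "('a::real_vector \<Rightarrow> 'a) \<Rightarrow> 'a \<Rightarrow> 'a" where
  "reA cj x = (1/2) *\<^sub>R trc cj x"

definition imA :: "('a::real_vector \<Rightarrow> 'a) \<Rightarrow> 'a \<Rightarrow> 'a" where
  "imA cj x = x - reA cj x"

definition ainv :: "('a::real_vector \<Rightarrow> 'a \<Rightarrow> 'a) \<Rightarrow> 'a \<Rightarrow> 'a \<Rightarrow> 'a" where
  "ainv mul e x = (THE y. mul x y = e \<and> mul y x = e)"

definition OmegaD :: "('a::real_vector \<Rightarrow> 'a \<Rightarrow> 'a) \<Rightarrow> 'a \<Rightarrow> ('a \<Rightarrow> 'a) \<Rightarrow> complex set \<Rightarrow> 'a set" where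
  "OmegaD mul e cj D = {Re z *\<^sub>R e + Im z *\<^sub>R J | z J. z \<in> D \<and> J \<in> sphA mul e cj}"

text \<open>A stem function F = F1 + i F2 : D \<rightarrow> A_C is given by its two components;
F(conj z) = conj(F z) means F1(cnj z) = F1 z and F2(cnj z) = - F2 z.\<close>
definition is_stem :: "complex set \<Rightarrow> (complex \<Rightarrow> 'a::real_vector) \<Rightarrow> (complex \<Rightarrow> 'a) \<Rightarrow> bool" where
  "is_stem D F1 F2 \<longleftrightarrow> (\<forall>z\<in>D. F1 (cnj z) = F1 z \<and> F2 (cnj z) = - F2 z)"

definition induces :: "('a::real_vector \<Rightarrow> 'a \<Rightarrow> 'a) \<Rightarrow> 'a \<Rightarrow> ('a \<Rightarrow> 'a) \<Rightarrow> complex set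
    \<Rightarrow> (complex \<Rightarrow> 'a) \<Rightarrow> (complex \<Rightarrow> 'a) \<Rightarrow> ('a \<Rightarrow> 'a) \<Rightarrow> bool" where
  "induces mul e cj D F1 F2 f \<longleftrightarrow>
     (\<forall>z\<in>D. \<forall>J\<in>sphA mul e cj. f (Re z *\<^sub>R e + Im z *\<^sub>R J) = F1 z + mul J (F2 z))"

text \<open>Slice functions on Omega_D (only their values on Omega_D matter).\<close>
definition slice_fun :: "('a::real_vector \<Rightarrow> 'a \<Rightarrow> 'a) \<Rightarrow> 'a \<Rightarrow> ('a \<Rightarrow> 'a) \<Rightarrow> complex set
    \<Rightarrow> ('a \<Rightarrow> 'a) \<Rightarrow> bool" where
  "slice_fun mul e cj D f \<longleftrightarrow> (\<exists>F1 F2. is_stem D F1 F2 \<and> induces mul e cj D F1 F2 f)"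

text \<open>Slice product f \<cdot> g = I(FG) on Omega_D, where F, G are stem functions on D
inducing f, g; (F1 + iF2)(G1 + iG2) = F1G1 - F2G2 + i(F1G2 + F2G1).\<close>
definition sprod :: "('a::real_vector \<Rightarrow> 'a \<Rightarrow> 'a) \<Rightarrow> 'a \<Rightarrow> ('a \<Rightarrow> 'a) \<Rightarrow> complex set
    \<Rightarrow> ('a \<Rightarrow> 'a) \<Rightarrow> ('a \<Rightarrow> 'a) \<Rightarrow> 'a \<Rightarrow> 'a" where
  "sprod mul e cj D f g x = (SOME y. \<exists>F1 F2 G1 G2 z J.
      is_stem D F1 F2 \<and> induces mul e cj D F1 F2 f \<and>
      is_stem D G1 G2 \<and> induces mul e cj D G1 G2 g \<and>
      z \<in> D \<and> J \<in> sphA mul e cj \<and> x = Re z *\<^sub>R e + Im z *\<^sub>R J \<and>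
      y = (mul (F1 z) (G1 z) - mul (F2 z) (G2 z)) + mul J (mul (F1 z) (G2 z) + mul (F2 z) (G1 z)))"

definition sph_val :: "('a::real_vector \<Rightarrow> 'a) \<Rightarrow> ('a \<Rightarrow> 'a) \<Rightarrow> 'a \<Rightarrow> 'a" where
  "sph_val cj f x = (1/2) *\<^sub>R (f x + f (cj x))"

definition sph_der :: "('a::real_vector \<Rightarrow> 'a \<Rightarrow> 'a) \<Rightarrow> 'a \<Rightarrow> ('a \<Rightarrow> 'a) \<Rightarrow> ('a \<Rightarrow> 'a) \<Rightarrow> 'a \<Rightarrow> 'a" where
  "sph_der mul e cj f x = (1/2) *\<^sub>R mul (ainv mul e (imA cj x)) (f x - f (cj x))"

end

theory Submission
  imports Defs
begin

text \<open>
At a non-real point \<open>x = \<alpha> + \<beta>J\<close>, with \<open>f, g\<close> induced by \<open>F\<^sub>1 + \<i>F\<^sub>2\<close> and \<open>G\<^sub>1 + \<i>G\<^sub>2\<close>,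
everything is read off the stem components: \<open>(f\<cdot>g)(x) = F\<^sub>1G\<^sub>1 - F\<^sub>2G\<^sub>2 + J(F\<^sub>1G\<^sub>2 + F\<^sub>2G\<^sub>1)\<close>,
\<open>g\<^sup>\<circ>\<^sub>s\<close> is induced by \<open>G\<^sub>1\<close>, \<open>g'\<^sub>s\<close> by \<open>G\<^sub>2/\<beta>\<close>, and \<open>im x = \<beta>J\<close>. The first formula is then
bilinearity and \<open>J(Jy) = -y\<close>. For the second, the alternative laws give
\<open>(Ja)(Jb) = -ab - J((Ja)b) + J(a(Jb))\<close>; with this, \<open>f(x) g\<^sup>\<circ>\<^sub>s(x) + im(x)(f(x) g'\<^sub>s(x))\<close> differs
from \<open>(f\<cdot>g)(x)\<close> by exactly the associator \<open>(\<beta>J, F\<^sub>2/\<beta>, G\<^sub>1 - JG\<^sub>2) = (im x, f'\<^sub>s(x), g(x\<^sup>c))\<close>.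
The slice product, defined by choosing a representation of \<open>x\<close>, is well defined because
\<open>\<alpha> + \<beta>J\<close> determines \<open>(\<alpha>, \<beta>, J)\<close> up to \<open>(\<alpha>, -\<beta>, -J)\<close> and stem functions are determined by
the functions they induce.
\<close>

locale alt_star_algebra =
  fixes mul :: "'a::euclidean_space \<Rightarrow> 'a \<Rightarrow> 'a" and e :: 'a and cj :: "'a \<Rightarrow> 'a"
  assumes alt_star_alg: "alt_star_alg mul e cj"
begin

abbreviation S :: "'a set" where "S \<equiv> sphA mul e cj"

lemma unit_nonzero: "e \<noteq> 0"
  and mul_unit_left [simp]: "mul e x = x"
  and mul_unit_right [simp]: "mul x e = x"
  and cj_cj [simp]: "cj (cj x) = x"
  and cj_real [simp]: "cj (r *\<^sub>R e) = r *\<^sub>R e"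
  and cj_unit [simp]: "cj e = e"
  and assoc_left_alt: "assoc mul x x y = 0"
  and assoc_right_alt: "assoc mul y x x = 0"
  using alt_star_alg by (auto simp: alt_star_alg_def dest: spec[of _ 1])

lemma mul_bilinear_simps [simp]:
  "mul (x + y) z = mul x z + mul y z" "mul x (y + z) = mul x y + mul x z"
  "mul (x - y) z = mul x z - mul y z" "mul x (y - z) = mul x y - mul x z"
  "mul (c *\<^sub>R x) y = c *\<^sub>R mul x y" "mul x (c *\<^sub>R y) = c *\<^sub>R mul x y"
  "mul (- x) y = - mul x y" "mul x (- y) = - mul x y"
  "mul 0 y = 0" "mul x 0 = 0"
proof -
  have "bilinear mul" using alt_star_alg by (simp add: alt_star_alg_def)
  then show "mul (x + y) z = mul x z + mul y z" "mul x (y + z) = mul x y + mul x z"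
    "mul (x - y) z = mul x z - mul y z" "mul x (y - z) = mul x y - mul x z"
    "mul (c *\<^sub>R x) y = c *\<^sub>R mul x y" "mul x (c *\<^sub>R y) = c *\<^sub>R mul x y"
    "mul (- x) y = - mul x y" "mul x (- y) = - mul x y"
    "mul 0 y = 0" "mul x 0 = 0"
    by (simp_all add: bilinear_ladd bilinear_radd bilinear_lsub bilinear_rsub
        bilinear_lmul bilinear_rmul bilinear_lneg bilinear_rneg bilinear_lzero bilinear_rzero)
qed

lemma cj_linear_simps [simp]:
  "cj (x + y) = cj x + cj y" "cj (x - y) = cj x - cj y" "cj (c *\<^sub>R x) = c *\<^sub>R cj x"
  "cj (- x) = - cj x"
proof -
  have "linear cj" using alt_star_alg by (simp add: alt_star_alg_def)
  then show "cj (x + y) = cj x + cj y" "cj (x - y) = cj x - cj y" "cj (c *\<^sub>R x) = c *\<^sub>R cj x"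
    "cj (- x) = - cj x"
    by (simp_all add: linear_add linear_diff linear_scale linear_neg)
qed

lemma assoc_swap_right: "assoc mul y x z = - assoc mul y z x"
proof -
  have "assoc mul y (x + z) (x + z) = 0" by (rule assoc_right_alt)
  then have "assoc mul y x x + assoc mul y x z + assoc mul y z x + assoc mul y z z = 0"
    by (simp add: assoc_def algebra_simps)
  then show ?thesis
    using assoc_right_alt[of y x] assoc_right_alt[of y z] by (simp add: eq_neg_iff_add_eq_0)
qed

lemma sph_cj: "J \<in> S \<Longrightarrow> cj J = - J"
  by (simp add: sphA_def trc_def add_eq_0_iff)

lemma sph_square: "J \<in> S \<Longrightarrow> mul J J = - e"
  using sph_cj[of J] by (simp add: sphA_def nrm_def minus_equation_iff)

lemma sph_mul_mul: "J \<in> S \<Longrightarrow> mul J (mul J y) = - y"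
  using assoc_left_alt[of J y] sph_square[of J] by (simp add: assoc_def)

lemma sph_uminus:
  assumes "J \<in> S" shows "- J \<in> S"
proof -
  have "cj (- J) = J" using sph_cj[OF assms] by simp
  then show ?thesis using sph_square[OF assms] by (simp add: sphA_def trc_def nrm_def)
qed

lemma sph_mul_mul_sph:
  assumes J: "J \<in> S"
  shows "mul (mul J a) (mul J b) = mul J (mul a (mul J b)) - mul J (mul (mul J a) b) - mul a b"
proof -
  have "assoc mul J (mul J b) a = - mul J (assoc mul J b a)"
    using J by (simp add: assoc_def sph_mul_mul sph_square)
  then have moufang: "assoc mul J a (mul J b) = - mul J (assoc mul J a b)"
    using assoc_swap_right[of J a "mul J b"] assoc_swap_right[of J b a] by simp
  have "mul J (mul (mul J a) b) = - mul a b + mul J (assoc mul J a b)"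
    using J by (simp add: assoc_def sph_mul_mul)
  then show ?thesis
    using moufang by (simp add: assoc_def algebra_simps)
qed

lemma slice_point_cj: "J \<in> S \<Longrightarrow> cj (a *\<^sub>R e + b *\<^sub>R J) = a *\<^sub>R e + b *\<^sub>R (- J)"
  by (simp add: sph_cj)

lemma slice_point_imA: "J \<in> S \<Longrightarrow> imA cj (a *\<^sub>R e + b *\<^sub>R J) = b *\<^sub>R J"
  unfolding imA_def reA_def trc_def slice_point_cj by (simp add: algebra_simps flip: scaleR_add_left)

lemma ainv_sph_scaled:
  assumes J: "J \<in> S" and b: "b \<noteq> 0"
  shows "ainv mul e (b *\<^sub>R J) = (- inverse b) *\<^sub>R J"
  unfolding ainv_def
proof (rule the_equality)
  show "mul (b *\<^sub>R J) ((- inverse b) *\<^sub>R J) = e \<and> mul ((- inverse b) *\<^sub>R J) (b *\<^sub>R J) = e"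
    using sph_square[OF J] b by simp
next
  fix y assume "mul (b *\<^sub>R J) y = e \<and> mul y (b *\<^sub>R J) = e"
  then have "mul J (b *\<^sub>R mul J y) = J" by simp
  then have "b *\<^sub>R y = - J" using sph_mul_mul[OF J] by (simp add: minus_equation_iff)
  moreover have "y = inverse b *\<^sub>R (b *\<^sub>R y)" using b by simp
  ultimately show "y = (- inverse b) *\<^sub>R J" by simp
qed

lemma slice_point_eq_cases:
  assumes J: "J \<in> S" and J': "J' \<in> S" and b: "b \<noteq> 0"
    and eq: "a *\<^sub>R e + b *\<^sub>R J = a' *\<^sub>R e + b' *\<^sub>R J'"
  shows "a' = a \<and> (b' = b \<and> J' = J \<or> b' = - b \<and> J' = - J)"
proof -
  have "cj (a *\<^sub>R e + b *\<^sub>R J) = cj (a' *\<^sub>R e + b' *\<^sub>R J')" using eq by simp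
  then have "a *\<^sub>R e - b *\<^sub>R J = a' *\<^sub>R e - b' *\<^sub>R J'" using sph_cj[OF J] sph_cj[OF J'] by simp
  with eq have "(a *\<^sub>R e + b *\<^sub>R J) + (a *\<^sub>R e - b *\<^sub>R J)
      = (a' *\<^sub>R e + b' *\<^sub>R J') + (a' *\<^sub>R e - b' *\<^sub>R J')"
    by (simp only:)
  then have a: "a = a'" using unit_nonzero by (simp add: algebra_simps flip: scaleR_add_left)
  with eq have bJ: "b *\<^sub>R J = b' *\<^sub>R J'" by simp
  then have "mul (b *\<^sub>R J) (b *\<^sub>R J) = mul (b' *\<^sub>R J') (b' *\<^sub>R J')" by simp
  then have "(b * b) *\<^sub>R e = (b' * b') *\<^sub>R e" using sph_square[OF J] sph_square[OF J'] by simp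
  then have "b * b = b' * b'" using unit_nonzero scaleR_cancel_right by blast
  then have "b' = b \<or> b' = - b" by (metis square_eq_iff)
  then show ?thesis
  proof
    assume "b' = b"
    with bJ b a show ?thesis by simp
  next
    assume "b' = - b"
    with bJ have "b *\<^sub>R J = b *\<^sub>R (- J')" by simp
    with b a \<open>b' = - b\<close> show ?thesis by (metis minus_minus scaleR_cancel_left)
  qed
qed

lemma induces_at:
  assumes "induces mul e cj D F1 F2 f" "z \<in> D" "J \<in> S"
  shows "f (Re z *\<^sub>R e + Im z *\<^sub>R J) = F1 z + mul J (F2 z)"
    and "f (cj (Re z *\<^sub>R e + Im z *\<^sub>R J)) = F1 z - mul J (F2 z)"
proof -
  show "f (Re z *\<^sub>R e + Im z *\<^sub>R J) = F1 z + mul J (F2 z)"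
    using assms unfolding induces_def by blast
  have "f (Re z *\<^sub>R e + Im z *\<^sub>R (- J)) = F1 z + mul (- J) (F2 z)"
    using assms sph_uminus unfolding induces_def by blast
  then show "f (cj (Re z *\<^sub>R e + Im z *\<^sub>R J)) = F1 z - mul J (F2 z)"
    unfolding slice_point_cj[OF assms(3)] by simp
qed

lemma induces_unique:
  assumes F: "induces mul e cj D F1 F2 f" and F': "induces mul e cj D F1' F2' f"
    and z: "z \<in> D" and J: "J \<in> S"
  shows "F1' z = F1 z" and "F2' z = F2 z"
proof -
  have plus: "F1' z + mul J (F2' z) = F1 z + mul J (F2 z)"
    using induces_at(1)[OF F z J] induces_at(1)[OF F' z J] by simp
  have minus: "F1' z - mul J (F2' z) = F1 z - mul J (F2 z)"
    using induces_at(2)[OF F z J] induces_at(2)[OF F' z J] by simp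
  have "(F1' z + mul J (F2' z)) + (F1' z - mul J (F2' z)) = (F1 z + mul J (F2 z)) + (F1 z - mul J (F2 z))"
    by (simp only: plus minus)
  then have "2 *\<^sub>R F1' z = 2 *\<^sub>R F1 z" by (simp add: algebra_simps flip: scaleR_2)
  then show F1: "F1' z = F1 z" by simp
  with plus have "mul J (mul J (F2' z)) = mul J (mul J (F2 z))" by simp
  then show "F2' z = F2 z" by (simp add: sph_mul_mul[OF J])
qed

lemma induces_restrict:
  "induces mul e cj D F1 F2 f \<Longrightarrow> induces mul e cj (D - \<real>) F1 F2 f"
  "is_stem D F1 F2 \<Longrightarrow> is_stem (D - \<real>) F1 F2"
  unfolding induces_def is_stem_def by auto

lemma sph_val_at:
  assumes "induces mul e cj D G1 G2 g" "z \<in> D" "J \<in> S"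
  shows "sph_val cj g (Re z *\<^sub>R e + Im z *\<^sub>R J) = G1 z"
  unfolding sph_val_def induces_at[OF assms] by (simp add: scaleR_2[symmetric])

lemma sph_der_at:
  assumes G: "induces mul e cj D G1 G2 g" and z: "z \<in> D" and J: "J \<in> S" and b: "Im z \<noteq> 0"
  shows "sph_der mul e cj g (Re z *\<^sub>R e + Im z *\<^sub>R J) = (1 / Im z) *\<^sub>R G2 z"
proof -
  have "sph_der mul e cj g (Re z *\<^sub>R e + Im z *\<^sub>R J)
      = (1/2) *\<^sub>R mul ((- inverse (Im z)) *\<^sub>R J) (G1 z + mul J (G2 z) - (G1 z - mul J (G2 z)))"
    unfolding sph_der_def induces_at[OF G z J] slice_point_imA[OF J] ainv_sph_scaled[OF J b] ..
  also have "\<dots> = (- inverse (Im z)) *\<^sub>R mul J (mul J (G2 z))"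
    by (simp add: algebra_simps flip: scaleR_2)
  also have "\<dots> = (1 / Im z) *\<^sub>R G2 z"
    by (simp add: sph_mul_mul[OF J] divide_inverse)
  finally show ?thesis .
qed

lemma sph_val_induced:
  assumes "is_stem D G1 G2" "induces mul e cj D G1 G2 g"
  shows "is_stem D G1 (\<lambda>_. 0)" "induces mul e cj D G1 (\<lambda>_. 0) (sph_val cj g)"
  using assms sph_val_at unfolding is_stem_def induces_def by simp_all

lemma sph_der_induced:
  assumes "is_stem D G1 G2" "induces mul e cj D G1 G2 g"
  shows "is_stem (D - \<real>) (\<lambda>w. (1 / Im w) *\<^sub>R G2 w) (\<lambda>_. 0)"
    "induces mul e cj (D - \<real>) (\<lambda>w. (1 / Im w) *\<^sub>R G2 w) (\<lambda>_. 0) (sph_der mul e cj g)"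
  using assms(1) sph_der_at[OF assms(2)]
  unfolding is_stem_def induces_def by (auto simp: complex_is_Real_iff)

definition stem_prod_at ::
    "(complex \<Rightarrow> 'a) \<Rightarrow> (complex \<Rightarrow> 'a) \<Rightarrow> (complex \<Rightarrow> 'a) \<Rightarrow> (complex \<Rightarrow> 'a) \<Rightarrow> complex \<Rightarrow> 'a \<Rightarrow> 'a"
  where "stem_prod_at F1 F2 G1 G2 z J =
    (mul (F1 z) (G1 z) - mul (F2 z) (G2 z)) + mul J (mul (F1 z) (G2 z) + mul (F2 z) (G1 z))"

lemma stem_prod_at_cnj:
  assumes "is_stem D F1 F2" "is_stem D G1 G2" "z \<in> D"
  shows "stem_prod_at F1 F2 G1 G2 (cnj z) (- J) = stem_prod_at F1 F2 G1 G2 z J"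
  using assms by (simp add: is_stem_def stem_prod_at_def)

lemma stem_prod_at_well_defined:
  assumes F: "induces mul e cj D F1 F2 f" and F': "is_stem D F1' F2'" "induces mul e cj D F1' F2' f"
    and G: "induces mul e cj D G1 G2 g" and G': "is_stem D G1' G2'" "induces mul e cj D G1' G2' g"
    and z: "z \<in> D" "Im z \<noteq> 0" and z': "z' \<in> D" and J: "J \<in> S" and J': "J' \<in> S"
    and x: "Re z' *\<^sub>R e + Im z' *\<^sub>R J' = Re z *\<^sub>R e + Im z *\<^sub>R J"
  shows "stem_prod_at F1' F2' G1' G2' z' J' = stem_prod_at F1 F2 G1 G2 z J"
proof -
  have same_stems: "stem_prod_at F1' F2' G1' G2' z J = stem_prod_at F1 F2 G1 G2 z J"
    using induces_unique[OF F F'(2) z(1) J] induces_unique[OF G G'(2) z(1) J]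
    by (simp add: stem_prod_at_def)
  from slice_point_eq_cases[OF J J' z(2) x[symmetric]]
  have "z' = z \<and> J' = J \<or> z = cnj z' \<and> J = - J'"
    by (auto simp: complex_eq_iff)
  then show ?thesis
    using same_stems stem_prod_at_cnj[OF F'(1) G'(1) z'] by auto
qed

lemma sprod_eq_stem_prod_at:
  assumes F: "is_stem D F1 F2" "induces mul e cj D F1 F2 f"
    and G: "is_stem D G1 G2" "induces mul e cj D G1 G2 g"
    and z: "z \<in> D" "Im z \<noteq> 0" and J: "J \<in> S" and x: "x = Re z *\<^sub>R e + Im z *\<^sub>R J"
  shows "sprod mul e cj D f g x = stem_prod_at F1 F2 G1 G2 z J"
  unfolding sprod_def
proof (rule some_equality)
  show "\<exists>F1' F2' G1' G2' z' J'. is_stem D F1' F2' \<and> induces mul e cj D F1' F2' f \<and>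
      is_stem D G1' G2' \<and> induces mul e cj D G1' G2' g \<and>
      z' \<in> D \<and> J' \<in> S \<and> x = Re z' *\<^sub>R e + Im z' *\<^sub>R J' \<and>
      stem_prod_at F1 F2 G1 G2 z J = (mul (F1' z') (G1' z') - mul (F2' z') (G2' z'))
        + mul J' (mul (F1' z') (G2' z') + mul (F2' z') (G1' z'))"
    using assms unfolding stem_prod_at_def by blast
next
  fix y
  assume "\<exists>F1' F2' G1' G2' z' J'. is_stem D F1' F2' \<and> induces mul e cj D F1' F2' f \<and>
      is_stem D G1' G2' \<and> induces mul e cj D G1' G2' g \<and>
      z' \<in> D \<and> J' \<in> S \<and> x = Re z' *\<^sub>R e + Im z' *\<^sub>R J' \<and>
      y = (mul (F1' z') (G1' z') - mul (F2' z') (G2' z'))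
        + mul J' (mul (F1' z') (G2' z') + mul (F2' z') (G1' z'))"
  then obtain F1' F2' G1' G2' z' J' where
    F': "is_stem D F1' F2'" "induces mul e cj D F1' F2' f" and
    G': "is_stem D G1' G2'" "induces mul e cj D G1' G2' g" and
    z': "z' \<in> D" and J': "J' \<in> S" and x': "x = Re z' *\<^sub>R e + Im z' *\<^sub>R J'" and
    y: "y = stem_prod_at F1' F2' G1' G2' z' J'"
    unfolding stem_prod_at_def by blast
  show "y = stem_prod_at F1 F2 G1 G2 z J"
    unfolding y using x x'
    by (intro stem_prod_at_well_defined[OF F(2) F' G(2) G' z z' J J']) simp
qed

lemma OmegaD_nonreal_point:
  assumes "x \<in> OmegaD mul e cj D - realsA e"
  obtains z J where "z \<in> D" "Im z \<noteq> 0" "J \<in> S" "x = Re z *\<^sub>R e + Im z *\<^sub>R J"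
  using assms unfolding OmegaD_def realsA_def by force

lemma sprod_sph_val_sph_der:
  assumes F: "is_stem D F1 F2" "induces mul e cj D F1 F2 f"
    and G: "is_stem D G1 G2" "induces mul e cj D G1 G2 g"
    and z: "z \<in> D" "Im z \<noteq> 0" and J: "J \<in> S" and x: "x = Re z *\<^sub>R e + Im z *\<^sub>R J"
  shows "sprod mul e cj D f g x =
    sprod mul e cj D f (sph_val cj g) x
      + mul (imA cj x) (sprod mul e cj (D - \<real>) f (sph_der mul e cj g) x)"
proof -
  have z_nonreal: "z \<in> D - \<real>" using z by (simp add: complex_is_Real_iff)
  have "sprod mul e cj (D - \<real>) f (sph_der mul e cj g) x
      = stem_prod_at F1 F2 (\<lambda>w. (1 / Im w) *\<^sub>R G2 w) (\<lambda>_. 0) z J"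
    by (rule sprod_eq_stem_prod_at[OF induces_restrict(2)[OF F(1)] induces_restrict(1)[OF F(2)]
          sph_der_induced[OF G] z_nonreal z(2) J x])
  moreover have "sprod mul e cj D f (sph_val cj g) x = stem_prod_at F1 F2 G1 (\<lambda>_. 0) z J"
    by (rule sprod_eq_stem_prod_at[OF F sph_val_induced[OF G] z J x])
  moreover have "imA cj x = Im z *\<^sub>R J" unfolding x by (rule slice_point_imA[OF J])
  ultimately show ?thesis
    unfolding sprod_eq_stem_prod_at[OF F G z J x]
    using z(2) by (simp add: stem_prod_at_def sph_mul_mul[OF J])
qed

lemma sprod_pointwise:
  assumes F: "is_stem D F1 F2" "induces mul e cj D F1 F2 f"
    and G: "is_stem D G1 G2" "induces mul e cj D G1 G2 g"
    and z: "z \<in> D" "Im z \<noteq> 0" and J: "J \<in> S" and x: "x = Re z *\<^sub>R e + Im z *\<^sub>R J"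
  shows "sprod mul e cj D f g x =
    mul (f x) (sph_val cj g x) + mul (imA cj x) (mul (f x) (sph_der mul e cj g x))
      - assoc mul (imA cj x) (sph_der mul e cj f x) (g (cj x))"
proof -
  have im: "imA cj x = Im z *\<^sub>R J" unfolding x by (rule slice_point_imA[OF J])
  have fx: "f x = F1 z + mul J (F2 z)" unfolding x by (rule induces_at(1)[OF F(2) z(1) J])
  have gcx: "g (cj x) = G1 z - mul J (G2 z)" unfolding x by (rule induces_at(2)[OF G(2) z(1) J])
  have val: "sph_val cj g x = G1 z" unfolding x by (rule sph_val_at[OF G(2) z(1) J])
  have der_f: "sph_der mul e cj f x = (1 / Im z) *\<^sub>R F2 z"
    unfolding x by (rule sph_der_at[OF F(2) z(1) J z(2)])
  have der_g: "sph_der mul e cj g x = (1 / Im z) *\<^sub>R G2 z"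
    unfolding x by (rule sph_der_at[OF G(2) z(1) J z(2)])
  show ?thesis
    unfolding sprod_eq_stem_prod_at[OF F G z J x] im fx gcx val der_f der_g
    using z(2) sph_mul_mul_sph[OF J, of "F2 z" "G2 z"]
    by (simp add: stem_prod_at_def assoc_def algebra_simps)
qed

end

theorem theorem3p4:
  fixes mul :: "'a::euclidean_space \<Rightarrow> 'a \<Rightarrow> 'a" and e :: 'a and cj :: "'a \<Rightarrow> 'a"
    and D :: "complex set" and f g :: "'a \<Rightarrow> 'a"
  assumes "alt_star_alg mul e cj"
    and "sphA mul e cj \<noteq> {}"
    and "D \<noteq> {}" and "\<forall>z\<in>D. cnj z \<in> D"
    and "slice_fun mul e cj D f" and "slice_fun mul e cj D g"
  shows "(\<forall>x\<in>OmegaD mul e cj D - realsA e.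
           sprod mul e cj D f g x =
             sprod mul e cj D f (sph_val cj g) x
             + mul (imA cj x) (sprod mul e cj (D - \<real>) f (sph_der mul e cj g) x))
       \<and> (\<forall>x\<in>OmegaD mul e cj D - realsA e.
           sprod mul e cj D f g x =
             mul (f x) (sph_val cj g x) + mul (imA cj x) (mul (f x) (sph_der mul e cj g x))
             - assoc mul (imA cj x) (sph_der mul e cj f x) (g (cj x)))"
proof -
  interpret alt_star_algebra mul e cj by unfold_locales (rule assms(1))
  obtain F1 F2 G1 G2 where
    F: "is_stem D F1 F2" "induces mul e cj D F1 F2 f" and
    G: "is_stem D G1 G2" "induces mul e cj D G1 G2 g"
    using assms(5,6) unfolding slice_fun_def by blast
  show ?thesis
  proof (intro conjI ballI)
    fix x assume "x \<in> OmegaD mul e cj D - realsA e"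
    then obtain z J where z: "z \<in> D" "Im z \<noteq> 0" and J: "J \<in> S"
      and x: "x = Re z *\<^sub>R e + Im z *\<^sub>R J"
      by (rule OmegaD_nonreal_point)
    show "sprod mul e cj D f g x = sprod mul e cj D f (sph_val cj g) x
        + mul (imA cj x) (sprod mul e cj (D - \<real>) f (sph_der mul e cj g) x)"
      by (rule sprod_sph_val_sph_der[OF F G z J x])
    show "sprod mul e cj D f g x = mul (f x) (sph_val cj g x)
        + mul (imA cj x) (mul (f x) (sph_der mul e cj g x))
        - assoc mul (imA cj x) (sph_der mul e cj f x) (g (cj x))"
      by (rule sprod_pointwise[OF F G z J x])
  qed
qed

end
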